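(* For any $\tilde x\in\widetilde{\mathcal{X}}_\ell$ and any $\tilde y\in\widetilde{\mathcal{Y}}_{\mathcal{M}}(\tilde x)$, the distribution $Q(\tilde y,\tilde x,\Xi(\tilde x))$ has the submodular dominance property: for every submodular function $f:\{0,1\}^n\to\mathbb{R}$, $$\mathbb{E}_{\hat y\sim Q(\tilde y,\tilde x,\Xi(\tilde x))}[f(\hat y)]\ \ge\ \mathbb{E}_{\hat y\sim\mathbf{Ind}(\tilde y)}[f(\hat y)].$$
   Context: $\mathcal{M}$ is a matroid on $[n]$ with matroid polytope $\mathcal{P}(\mathcal{M})$. $\mathcal{X}_\ell=\{x\in\{0,1\}^n:\sum_ix_i\le\ell\}$, $\widetilde{\mathcal{X}}_\ell=\{\tilde x\in[0,1]^n:\sum_i\tilde x_i\le\ell\}$, $\widetilde{\mathcal{Y}}_{\mathcal{M}}(\tilde x)=\{\tilde y\in[0,1]^n:\tilde y\in\mathcal{P}(\mathcal{M}),\tilde y\le\tilde x\}$. For $p\in[0,1]^n$, $\mathbf{Ind}(p)$ is the distribution of a random vector in $\{0,1\}^n$ with independent coordinates, coordinate $i$ equal to $1$ with probability $p_i$. $\Xi$ is randomized pipage rounding (Chekuri–Vondrák–Zenklusen 2009) from $\widetilde{\mathcal{X}}_\ell$ to $\mathcal{X}_\ell$: repeatedly pick two fractional coordinates $i,j$, set $\epsilon_1=\min(1-\tilde x_i,\tilde x_j)$, $\epsilon_2=\min(\tilde x_i,1-\tilde x_j)$, and with probability $\epsilon_2/(\epsilon_1+\epsilon_2)$ move to $(\tilde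 x_i+\epsilon_1,\tilde x_j-\epsilon_1)$, else to $(\tilde x_i-\epsilon_2,\tilde x_j+\epsilon_2)$, until integral (a lone fractional coordinate is handled as in that reference). The randomized map $Q(\tilde y,\tilde x,x)$: $a_i=\tilde y_i/\tilde x_i$ if $\tilde x_i\ne0$, else $0$; independent $c_i\sim\mathrm{Bernoulli}(a_i)$; output $\hat y$ with $\hat y_i=1$ iff $x_i=1$ and $c_i=1$. $Q(\tilde y,\tilde x,\Xi(\tilde x))$ is the distribution of $Q(\tilde y,\tilde x,x)$ with $x\sim\Xi(\tilde x)$ independent of the $c_i$. *)

theory Defs
  imports "HOL-Probability.Probability"
begin

text \<open>Ground set [n] is represented as {..<n} (i.e. 0..n-1). Vectors in R^n are
functions nat => real (only coordinates i < n matter); points of {0,1}^n are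
identified with subsets of {..<n}.\<close>

definition matroid :: "nat \<Rightarrow> nat set set \<Rightarrow> bool" where
  "matroid n I \<longleftrightarrow>
     (\<forall>A\<in>I. A \<subseteq> {..<n}) \<and> {} \<in> I \<and>
     (\<forall>A B. A \<in> I \<longrightarrow> B \<subseteq> A \<longrightarrow> B \<in> I) \<and>
     (\<forall>A B. A \<in> I \<longrightarrow> B \<in> I \<longrightarrow> card A < card B \<longrightarrow> (\<exists>e\<in>B - A. insert e A \<in> I))"

definition matroid_polytope :: "nat \<Rightarrow> nat set set \<Rightarrow> (nat \<Rightarrow> real) set" where
  "matroid_polytope n I = {y. \<exists>w::nat set \<Rightarrow> real.
      (\<forall>A\<in>I. 0 \<le> w A) \<and> (\<Sum>A\<in>I. w A) = 1 \<and>
      (\<forall>i<n. y i = (\<Sum>A\<in>I. w A * (if i \<in> A then 1 else 0)))}"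

definition X_tilde :: "nat \<Rightarrow> nat \<Rightarrow> (nat \<Rightarrow> real) set" where
  "X_tilde n l = {x. (\<forall>i<n. 0 \<le> x i \<and> x i \<le> 1) \<and> (\<Sum>i<n. x i) \<le> real l}"

definition Y_tilde :: "nat \<Rightarrow> nat set set \<Rightarrow> (nat \<Rightarrow> real) \<Rightarrow> (nat \<Rightarrow> real) set" where
  "Y_tilde n I x = {y. (\<forall>i<n. 0 \<le> y i \<and> y i \<le> 1) \<and> y \<in> matroid_polytope n I \<and>
                        (\<forall>i<n. y i \<le> x i)}"

definition submodular :: "nat \<Rightarrow> (nat set \<Rightarrow> real) \<Rightarrow> bool" where
  "submodular n f \<longleftrightarrow> (\<forall>A B. A \<subseteq> {..<n} \<longrightarrow> B \<subseteq> {..<n} \<longrightarrow>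
       f (A \<union> B) + f (A \<inter> B) \<le> f A + f B)"

definition Ind :: "nat \<Rightarrow> (nat \<Rightarrow> real) \<Rightarrow> nat set pmf" where
  "Ind n p = map_pmf (\<lambda>b. {i. b i}) (Pi_pmf {..<n} False (\<lambda>i. bernoulli_pmf (p i)))"

definition frac_coords :: "nat \<Rightarrow> (nat \<Rightarrow> real) \<Rightarrow> nat set" where
  "frac_coords n x = {i. i < n \<and> 0 < x i \<and> x i < 1}"

definition valid_selector :: "nat \<Rightarrow> ((nat \<Rightarrow> real) \<Rightarrow> nat \<times> nat) \<Rightarrow> bool" where
  "valid_selector n sel \<longleftrightarrow> (\<forall>x. 2 \<le> card (frac_coords n x) \<longrightarrow>
      fst (sel x) \<in> frac_coords n x \<and> snd (sel x) \<in> frac_coords n x \<and> fst (sel x) \<noteq> snd (sel x))"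

definition pipage_step :: "((nat \<Rightarrow> real) \<Rightarrow> nat \<times> nat) \<Rightarrow> nat \<Rightarrow> (nat \<Rightarrow> real) \<Rightarrow> (nat \<Rightarrow> real) pmf" where
  "pipage_step sel n x =
     (let F = frac_coords n x in
      if 2 \<le> card F then
        (let i = fst (sel x); j = snd (sel x);
             e1 = min (1 - x i) (x j); e2 = min (x i) (1 - x j) in
         map_pmf (\<lambda>b. if b then x(i := x i + e1, j := x j - e1)
                          else x(i := x i - e2, j := x j + e2))
                 (bernoulli_pmf (e2 / (e1 + e2))))
      else if card F = 1 then
        (let i = the_elem F in map_pmf (\<lambda>b. x(i := (if b then 1 else 0))) (bernoulli_pmf (x i)))
      else return_pmf x)"

fun pipage_iter :: "((nat \<Rightarrow> real) \<Rightarrow> nat \<times> nat) \<Rightarrow> nat \<Rightarrow> nat \<Rightarrow> (nat \<Rightarrow> real) \<Rightarrow> (nat \<Rightarrow> real) pmf" where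
  "pipage_iter sel n 0 x = return_pmf x"
| "pipage_iter sel n (Suc k) x = bind_pmf (pipage_step sel n x) (pipage_iter sel n k)"

text \<open>Xi: each step makes at least one more coordinate integral, so n steps suffice
to reach an integral vector; the output is the set of coordinates equal to 1.\<close>
definition pipage_rounding :: "((nat \<Rightarrow> real) \<Rightarrow> nat \<times> nat) \<Rightarrow> nat \<Rightarrow> (nat \<Rightarrow> real) \<Rightarrow> nat set pmf" where
  "pipage_rounding sel n x = map_pmf (\<lambda>z. {i. i < n \<and> z i = 1}) (pipage_iter sel n n x)"

definition Q_dist :: "nat \<Rightarrow> (nat \<Rightarrow> real) \<Rightarrow> (nat \<Rightarrow> real) \<Rightarrow> nat set pmf \<Rightarrow> nat set pmf" where
  "Q_dist n y x D =
     bind_pmf D (\<lambda>S. map_pmf (\<lambda>C. S \<inter> C)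
        (Ind n (\<lambda>i. if x i \<noteq> 0 then y i / x i else 0)))"

end

theory Submission imports Defs begin

(* Put a_i = y_i / x_i and let F be the multilinear extension of f.  The potential
   G(z) = F(z_1 a_1, ..., z_n a_n) starts at G(x) = F(y), and once z is integral it is the
   expectation of f under Q given the rounded vector.  It never decreases in expectation along
   pipage rounding: G is affine in each coordinate, which handles a lone fractional coordinate;
   and along a pair move z + t(e_i - e_j), which has mean zero in t, G is a quadratic in t with
   leading coefficient -a_i a_j times the mixed second difference of F in coordinates i, j,
   which is nonpositive for submodular f. *)

lemma bernoulli_pmf_0: "bernoulli_pmf 0 = return_pmf False"
  by (rule pmf_eqI) (simp split: split_indicator)

lemma bernoulli_pmf_1: "bernoulli_pmf 1 = return_pmf True"
  by (rule pmf_eqI) (simp split: split_indicator)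

lemma expectation_bind_pmf_finite:
  fixes h :: "'b \<Rightarrow> real"
  assumes "finite (set_pmf M)" "\<And>x. x \<in> set_pmf M \<Longrightarrow> finite (set_pmf (N x))"
  shows "measure_pmf.expectation (bind_pmf M N) h =
         measure_pmf.expectation M (\<lambda>x. measure_pmf.expectation (N x) h)"
  using pmf_expectation_bind[where A="set_pmf M" and p=M and f=N and h=h]
    integral_measure_pmf[where A="set_pmf M" and M=M and f="\<lambda>x. measure_pmf.expectation (N x) h"]
    assms by simp

lemma Ind_cong: "(\<And>k. k < n \<Longrightarrow> p k = q k) \<Longrightarrow> Ind n p = Ind n q"
  unfolding Ind_def by (intro arg_cong[where f="map_pmf _"] Pi_pmf_cong) auto

lemma set_pmf_Ind_subset: "C \<in> set_pmf (Ind n p) \<Longrightarrow> C \<subseteq> {..<n}"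
  unfolding Ind_def using set_Pi_pmf_subset[of "{..<n}" False "\<lambda>k. bernoulli_pmf (p k)"] by auto

lemma finite_set_pmf_Ind: "finite (set_pmf (Ind n p))"
  by (rule finite_subset[of _ "Pow {..<n}"]) (auto dest: set_pmf_Ind_subset)

lemma set_pmf_Ind_zero:
  assumes "C \<in> set_pmf (Ind n p)" "p k = 0"
  shows "k \<notin> C"
proof -
  obtain b where b: "b \<in> set_pmf (Pi_pmf {..<n} False (\<lambda>k. bernoulli_pmf (p k)))" and C: "C = {k. b k}"
    using assms(1) unfolding Ind_def by auto
  have "b k \<in> set_pmf (bernoulli_pmf (p k)) \<or> b k = False"
    using b unfolding set_Pi_pmf[OF finite_lessThan] PiE_dflt_def by auto
  then show ?thesis using assms(2) unfolding C by (auto simp: bernoulli_pmf_0)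
qed

lemma Ind_fun_upd:
  assumes "i < n"
  shows "Ind n (p(i := s)) =
         bind_pmf (bernoulli_pmf s) (\<lambda>u. map_pmf (\<lambda>C. if u then insert i C else C) (Ind n (p(i := 0))))"
proof -
  define R where "R = Pi_pmf ({..<n} - {i}) False (\<lambda>k. bernoulli_pmf (p k))"
  define D where "D u = map_pmf (\<lambda>b. {k. (b(i := u)) k}) R" for u
  have Ind_split: "Ind n (p(i := t)) = bind_pmf (bernoulli_pmf t) D" for t
  proof -
    have "insert i ({..<n} - {i}) = {..<n}" using assms by auto
    then have "Pi_pmf {..<n} False (\<lambda>k. bernoulli_pmf ((p(i := t)) k)) =
        bind_pmf (bernoulli_pmf t) (\<lambda>u. map_pmf (\<lambda>b. b(i := u))
          (Pi_pmf ({..<n} - {i}) False (\<lambda>k. bernoulli_pmf ((p(i := t)) k))))"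
      using Pi_pmf_insert'[of "{..<n} - {i}" i False] by (simp add: map_pmf_def)
    also have "Pi_pmf ({..<n} - {i}) False (\<lambda>k. bernoulli_pmf ((p(i := t)) k)) = R"
      unfolding R_def by (intro Pi_pmf_cong) auto
    finally show ?thesis unfolding Ind_def D_def by (simp only: map_bind_pmf map_pmf_comp)
  qed
  have D_from_False: "D u = map_pmf (\<lambda>C. if u then insert i C else C) (D False)" for u
    unfolding D_def map_pmf_comp by (rule map_pmf_cong) auto
  show ?thesis
    unfolding Ind_split[of s] Ind_split[of 0] bernoulli_pmf_0 bind_return_pmf
    by (intro bind_pmf_cong refl) (rule D_from_False)
qed

lemma Ind_fun_upd_1: "i < n \<Longrightarrow> Ind n (p(i := 1)) = map_pmf (insert i) (Ind n (p(i := 0)))"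
  using Ind_fun_upd[of i n p 1] by (simp add: bernoulli_pmf_1 bind_return_pmf)

lemma Ind_restrict: "Ind n (\<lambda>k. if k \<in> S then a k else 0) = map_pmf (\<lambda>C. S \<inter> C) (Ind n a)"
proof -
  let ?S = "{k \<in> {..<n}. k \<in> S}"
  have "Pi_pmf {..<n} False (\<lambda>k. bernoulli_pmf (if k \<in> S then a k else 0)) =
        Pi_pmf {..<n} False (\<lambda>k. if k \<in> S then bernoulli_pmf (a k) else return_pmf False)"
    by (intro Pi_pmf_cong) (auto simp: bernoulli_pmf_0)
  also have "\<dots> = Pi_pmf ?S False (\<lambda>k. bernoulli_pmf (a k))"
    by (rule Pi_pmf_if_set) simp
  also have "\<dots> = map_pmf (\<lambda>b k. if k \<in> ?S then b k else False) (Pi_pmf {..<n} False (\<lambda>k. bernoulli_pmf (a k)))"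
    by (rule Pi_pmf_subset) auto
  finally have Pi_restrict: "Pi_pmf {..<n} False (\<lambda>k. bernoulli_pmf (if k \<in> S then a k else 0)) =
    map_pmf (\<lambda>b k. if k \<in> ?S then b k else False) (Pi_pmf {..<n} False (\<lambda>k. bernoulli_pmf (a k)))" .
  have "S \<inter> {k. b k} = {k. if k \<in> ?S then b k else False}"
    if "b \<in> set_pmf (Pi_pmf {..<n} False (\<lambda>k. bernoulli_pmf (a k)))" for b
  proof -
    have "\<forall>k. k \<notin> {..<n} \<longrightarrow> b k = False"
      using set_Pi_pmf_subset[of "{..<n}" False "\<lambda>k. bernoulli_pmf (a k)"] that by blast
    then show ?thesis by auto
  qed
  then show ?thesis
    unfolding Ind_def Pi_restrict map_pmf_comp by (intro map_pmf_cong refl) auto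
qed

definition multilinear_ext :: "nat \<Rightarrow> (nat set \<Rightarrow> real) \<Rightarrow> (nat \<Rightarrow> real) \<Rightarrow> real" where
  "multilinear_ext n f p = measure_pmf.expectation (Ind n p) f"

lemma multilinear_ext_fun_upd:
  assumes "i < n" "0 \<le> s" "s \<le> 1"
  shows "multilinear_ext n f (p(i := s)) =
         s * multilinear_ext n f (p(i := 1)) + (1 - s) * multilinear_ext n f (p(i := 0))"
proof -
  have "multilinear_ext n f (p(i := s)) = measure_pmf.expectation (bernoulli_pmf s)
          (\<lambda>u. measure_pmf.expectation (Ind n (p(i := 0))) (\<lambda>C. f (if u then insert i C else C)))"
    unfolding multilinear_ext_def Ind_fun_upd[OF assms(1), of p s]
    by (subst expectation_bind_pmf_finite) (simp_all add: finite_set_pmf_Ind)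
  also have "\<dots> = s * measure_pmf.expectation (map_pmf (insert i) (Ind n (p(i := 0)))) f +
                   (1 - s) * measure_pmf.expectation (Ind n (p(i := 0))) f"
    using assms(2,3) by simp
  finally show ?thesis unfolding multilinear_ext_def Ind_fun_upd_1[OF assms(1)] .
qed

definition bilinear_interp :: "(bool \<Rightarrow> bool \<Rightarrow> real) \<Rightarrow> real \<Rightarrow> real \<Rightarrow> real" where
  "bilinear_interp V s t = s * t * V True True + s * (1 - t) * V True False
                         + (1 - s) * t * V False True + (1 - s) * (1 - t) * V False False"

lemma bilinear_interp_pipage_gain:
  fixes e1 e2 :: real
  assumes "e1 + e2 \<noteq> 0"
  shows "e2 / (e1 + e2) * bilinear_interp V (a * (u + e1)) (b * (v - e1))
       + e1 / (e1 + e2) * bilinear_interp V (a * (u - e2)) (b * (v + e2))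
       - bilinear_interp V (a * u) (b * v)
       = (V True False + V False True - V True True - V False False) * a * b * e1 * e2"
proof -
  let ?X = "bilinear_interp V (a * (u + e1)) (b * (v - e1))"
  let ?Y = "bilinear_interp V (a * (u - e2)) (b * (v + e2))"
  let ?Z = "bilinear_interp V (a * u) (b * v)"
  have "e2 / (e1 + e2) * ?X + e1 / (e1 + e2) * ?Y - ?Z = (e2 * ?X + e1 * ?Y - (e1 + e2) * ?Z) / (e1 + e2)"
    using assms by (simp add: diff_divide_distrib add_divide_distrib)
  also have "e2 * ?X + e1 * ?Y - (e1 + e2) * ?Z
      = (V True False + V False True - V True True - V False False) * a * b * e1 * e2 * (e1 + e2)"
    unfolding bilinear_interp_def by algebra
  finally show ?thesis
    using assms by simp
qed

lemma multilinear_ext_fun_upd2: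
  assumes "i < n" "j < n" "i \<noteq> j" "0 \<le> s" "s \<le> 1" "0 \<le> t" "t \<le> 1"
  shows "multilinear_ext n f (p(i := s, j := t)) =
         bilinear_interp (\<lambda>u v. multilinear_ext n f (p(i := of_bool u, j := of_bool v))) s t"
proof -
  have i_upd: "multilinear_ext n f (p(i := s, j := v)) =
      s * multilinear_ext n f (p(i := 1, j := v)) + (1 - s) * multilinear_ext n f (p(i := 0, j := v))" for v
    using multilinear_ext_fun_upd[OF assms(1,4,5), of f "p(j := v)"] assms(3)
    by (simp add: fun_upd_twist)
  show ?thesis
    using multilinear_ext_fun_upd[OF assms(2,6,7), of f "p(i := s)"]
    unfolding i_upd bilinear_interp_def by (simp add: algebra_simps)
qed

lemma multilinear_ext_vertex_submodular:
  assumes "submodular n f" "i < n" "j < n" "i \<noteq> j"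
  shows "multilinear_ext n f (p(i := 1, j := 1)) + multilinear_ext n f (p(i := 0, j := 0))
       \<le> multilinear_ext n f (p(i := 1, j := 0)) + multilinear_ext n f (p(i := 0, j := 1))"
proof -
  define q where "q = p(i := 0, j := 0)"
  define M where "M = Ind n q"
  have Ind_i: "Ind n (p(i := 1, j := 0)) = map_pmf (insert i) M"
    using Ind_fun_upd_1[OF assms(2), of q] assms(4) unfolding M_def q_def by (simp add: fun_upd_twist)
  have Ind_j: "Ind n (p(i := 0, j := 1)) = map_pmf (insert j) M"
    using Ind_fun_upd_1[OF assms(3), of q] unfolding M_def q_def by simp
  have Ind_ij: "Ind n (p(i := 1, j := 1)) = map_pmf (\<lambda>C. insert j (insert i C)) M"
    using Ind_fun_upd_1[OF assms(3), of "q(i := 1)"] Ind_i assms(4)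
    unfolding M_def q_def by (simp add: map_pmf_comp fun_upd_twist)
  have pointwise: "f (insert j (insert i C)) + f C \<le> f (insert i C) + f (insert j C)"
    if "C \<in> set_pmf M" for C
  proof -
    have "i \<notin> C" "j \<notin> C" "C \<subseteq> {..<n}"
      using that set_pmf_Ind_zero[of C n q] set_pmf_Ind_subset[of C n q] assms(4)
      unfolding M_def q_def by auto
    then have "insert i C \<union> insert j C = insert j (insert i C)" "insert i C \<inter> insert j C = C"
      using assms(4) by auto
    then show ?thesis
      using assms(1) \<open>C \<subseteq> {..<n}\<close> assms(2,3) unfolding submodular_def
      by (metis insert_subset lessThan_iff)
  qed
  have int: "integrable M g" for g :: "nat set \<Rightarrow> real"
    unfolding M_def by (rule integrable_measure_pmf_finite[OF finite_set_pmf_Ind])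
  have "measure_pmf.expectation M (\<lambda>C. f (insert j (insert i C)) + f C)
     \<le> measure_pmf.expectation M (\<lambda>C. f (insert i C) + f (insert j C))"
    using pointwise by (intro integral_mono_AE int) (simp add: AE_measure_pmf_iff)
  then show ?thesis
    unfolding multilinear_ext_def Ind_i Ind_j Ind_ij
    by (simp add: M_def[symmetric] q_def[symmetric] Bochner_Integration.integral_add[OF int int])
qed

definition pipage_potential :: "nat \<Rightarrow> (nat set \<Rightarrow> real) \<Rightarrow> (nat \<Rightarrow> real) \<Rightarrow> (nat \<Rightarrow> real) \<Rightarrow> real" where
  "pipage_potential n f a z = multilinear_ext n f (\<lambda>k. z k * a k)"

lemma pipage_potential_fun_upd:
  assumes "i < n" "a i \<in> {0..1}" "u \<in> {0..1}"
  shows "pipage_potential n f a (z(i := u)) =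
         u * pipage_potential n f a (z(i := 1)) + (1 - u) * pipage_potential n f a (z(i := 0))"
proof -
  define P where "P = (\<lambda>k. z k * a k)"
  have upd: "(\<lambda>k. (z(i := w)) k * a k) = P(i := w * a i)" for w
    unfolding P_def by (auto simp: fun_eq_iff)
  have pot: "pipage_potential n f a (z(i := w)) =
        w * a i * multilinear_ext n f (P(i := 1)) + (1 - w * a i) * multilinear_ext n f (P(i := 0))"
    if "w \<in> {0..1}" for w
    unfolding pipage_potential_def upd
    using that assms(2) by (intro multilinear_ext_fun_upd assms(1)) (auto simp: mult_le_one)
  show ?thesis
    unfolding pot[OF assms(3)] pot[of 1, simplified] pot[of 0, simplified] by (simp add: algebra_simps)
qed

lemma pipage_potential_pair_move:
  assumes "submodular n f" "i < n" "j < n" "i \<noteq> j" "a i \<in> {0..1}" "a j \<in> {0..1}"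
    and "0 < e1" "0 < e2" "0 \<le> z i - e2" "z i + e1 \<le> 1" "0 \<le> z j - e1" "z j + e2 \<le> 1"
  shows "pipage_potential n f a z \<le>
           e2 / (e1 + e2) * pipage_potential n f a (z(i := z i + e1, j := z j - e1))
         + e1 / (e1 + e2) * pipage_potential n f a (z(i := z i - e2, j := z j + e2))"
proof -
  define P where "P = (\<lambda>k. z k * a k)"
  define V where "V u v = multilinear_ext n f (P(i := of_bool u, j := of_bool v))" for u v
  have pot: "pipage_potential n f a (z(i := u, j := v)) = bilinear_interp V (a i * u) (a j * v)"
    if "u \<in> {0..1}" "v \<in> {0..1}" for u v
  proof -
    have "(\<lambda>k. (z(i := u, j := v)) k * a k) = P(i := a i * u, j := a j * v)"
      unfolding P_def using assms(4) by (auto simp: fun_eq_iff)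
    then show ?thesis
      unfolding pipage_potential_def V_def using that assms(5,6)
      by (simp only:) (intro multilinear_ext_fun_upd2 assms(2-4); simp add: mult_le_one)
  qed
  have "V True True + V False False \<le> V True False + V False True"
    unfolding V_def using multilinear_ext_vertex_submodular[OF assms(1-4), of P] by simp
  then have "0 \<le> (V True False + V False True - V True True - V False False) * a i * a j * e1 * e2"
    using assms(5-8) by simp
  also have "\<dots> = e2 / (e1 + e2) * bilinear_interp V (a i * (z i + e1)) (a j * (z j - e1))
                 + e1 / (e1 + e2) * bilinear_interp V (a i * (z i - e2)) (a j * (z j + e2))
                 - bilinear_interp V (a i * z i) (a j * z j)"
    using assms(7,8) by (intro bilinear_interp_pipage_gain[symmetric]) simp
  finally show ?thesis
    using pot[of "z i" "z j"] pot[of "z i + e1" "z j - e1"] pot[of "z i - e2" "z j + e2"] assms(7-12)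
    by simp
qed

lemma finite_frac_coords: "finite (frac_coords n z)"
  unfolding frac_coords_def by simp

lemma frac_coords_cases:
  obtains "2 \<le> card (frac_coords n z)" | i where "frac_coords n z = {i}" | "frac_coords n z = {}"
proof -
  consider "card (frac_coords n z) = 0" | "card (frac_coords n z) = 1" | "2 \<le> card (frac_coords n z)"
    by linarith
  then show thesis
  proof cases
    case 1
    then show thesis using that(3) finite_frac_coords by simp
  next
    case 2
    then show thesis using that(2) by (rule card_1_singletonE)
  qed (rule that(1))
qed

lemma pipage_step_pairE:
  assumes "valid_selector n sel" "2 \<le> card (frac_coords n z)"
  obtains i j e1 e2 where "i \<in> frac_coords n z" "j \<in> frac_coords n z" "i \<noteq> j"
    "e1 = min (1 - z i) (z j)" "e2 = min (z i) (1 - z j)"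
    "pipage_step sel n z = map_pmf (\<lambda>b. if b then z(i := z i + e1, j := z j - e1)
                                           else z(i := z i - e2, j := z j + e2))
                                  (bernoulli_pmf (e2 / (e1 + e2)))"
  using assms unfolding valid_selector_def pipage_step_def Let_def by auto

lemma pipage_step_single:
  "frac_coords n z = {i} \<Longrightarrow>
   pipage_step sel n z = map_pmf (\<lambda>b. z(i := (if b then 1 else 0))) (bernoulli_pmf (z i))"
  unfolding pipage_step_def Let_def by simp

lemma pipage_step_integral: "frac_coords n z = {} \<Longrightarrow> pipage_step sel n z = return_pmf z"
  unfolding pipage_step_def Let_def by simp

lemma finite_set_pmf_pipage_step: "finite (set_pmf (pipage_step sel n z))"
  unfolding pipage_step_def Let_def by simp

lemma finite_set_pmf_pipage_iter: "finite (set_pmf (pipage_iter sel n m z))"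
  by (induction m arbitrary: z) (auto simp: finite_set_pmf_pipage_step)

lemma set_pmf_pipage_step:
  assumes "valid_selector n sel" "\<forall>k<n. z k \<in> {0..1}" "z' \<in> set_pmf (pipage_step sel n z)"
  shows "\<forall>k<n. z' k \<in> {0..1}" "frac_coords n z' \<subset> frac_coords n z \<or> frac_coords n z' = {}"
proof -
  have "(\<forall>k<n. z' k \<in> {0..1}) \<and> (frac_coords n z' \<subset> frac_coords n z \<or> frac_coords n z' = {})"
  proof (cases rule: frac_coords_cases[of n z])
    case 1
    then obtain i j e1 e2 where ij: "i \<in> frac_coords n z" "j \<in> frac_coords n z" "i \<noteq> j"
      and e: "e1 = min (1 - z i) (z j)" "e2 = min (z i) (1 - z j)"
      and step: "pipage_step sel n z = map_pmf (\<lambda>b. if b then z(i := z i + e1, j := z j - e1)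
                                           else z(i := z i - e2, j := z j + e2))
                                  (bernoulli_pmf (e2 / (e1 + e2)))"
      using pipage_step_pairE[OF assms(1)] by blast
    have zi: "0 < z i" "z i < 1" and zj: "0 < z j" "z j < 1"
      using ij unfolding frac_coords_def by auto
    have e1: "0 < e1" "e1 \<le> 1 - z i" "e1 \<le> z j" and e2: "0 < e2" "e2 \<le> z i" "e2 \<le> 1 - z j"
      using zi zj unfolding e by auto
    have z': "z' = z(i := z i + e1, j := z j - e1) \<or> z' = z(i := z i - e2, j := z j + e2)"
      using assms(3) unfolding step by auto
    then have z'_other: "z' k = z k" if "k \<noteq> i" "k \<noteq> j" for k
      using that by auto
    have z'_ij: "z' i \<in> {0..1}" "z' j \<in> {0..1}"
      using z' ij(3) e1 e2 zi zj by auto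
    have "e1 = 1 - z i \<or> e1 = z j" "e2 = z i \<or> e2 = 1 - z j"
      unfolding e by linarith+
    then have "z' i \<in> {0, 1} \<or> z' j \<in> {0, 1}"
      using z' ij(3) by auto
    then have "i \<notin> frac_coords n z' \<or> j \<notin> frac_coords n z'"
      unfolding frac_coords_def by auto
    moreover have "frac_coords n z' \<subseteq> frac_coords n z"
    proof
      fix k assume "k \<in> frac_coords n z'"
      then show "k \<in> frac_coords n z"
        using z'_other[of k] ij by (cases "k = i \<or> k = j") (auto simp: frac_coords_def)
    qed
    ultimately have "frac_coords n z' \<subset> frac_coords n z"
      using ij by blast
    moreover have "\<forall>k<n. z' k \<in> {0..1}"
      using z'_other z'_ij assms(2) by metis
    ultimately show ?thesis by blast
  next
    case (2 i)
    obtain b where z': "z' = z(i := (if b then 1 else 0))"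
      using assms(3) unfolding pipage_step_single[OF 2] by auto
    have "k \<notin> frac_coords n z'" for k
      using 2 unfolding z' frac_coords_def by (cases "k = i") auto
    moreover have "\<forall>k<n. z' k \<in> {0..1}"
      using assms(2) unfolding z' by simp
    ultimately show ?thesis by blast
  next
    case 3
    then show ?thesis using assms(2,3) unfolding pipage_step_integral[OF 3] by simp
  qed
  then show "\<forall>k<n. z' k \<in> {0..1}" "frac_coords n z' \<subset> frac_coords n z \<or> frac_coords n z' = {}"
    by blast+
qed

lemma pipage_potential_le_pipage_step:
  assumes "valid_selector n sel" "submodular n f" "\<forall>k<n. a k \<in> {0..1}"
  shows "pipage_potential n f a z \<le> measure_pmf.expectation (pipage_step sel n z) (pipage_potential n f a)"
proof (cases rule: frac_coords_cases[of n z])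
  case 1
  then obtain i j e1 e2 where ij: "i \<in> frac_coords n z" "j \<in> frac_coords n z" "i \<noteq> j"
    and e: "e1 = min (1 - z i) (z j)" "e2 = min (z i) (1 - z j)"
    and step: "pipage_step sel n z = map_pmf (\<lambda>b. if b then z(i := z i + e1, j := z j - e1)
                                         else z(i := z i - e2, j := z j + e2))
                                (bernoulli_pmf (e2 / (e1 + e2)))"
    using pipage_step_pairE[OF assms(1)] by blast
  have zi: "0 < z i" "z i < 1" "i < n" and zj: "0 < z j" "z j < 1" "j < n"
    using ij unfolding frac_coords_def by auto
  have "0 < e1" "0 < e2"
    using zi zj unfolding e by auto
  then have "e2 / (e1 + e2) \<in> {0..1}" "1 - e2 / (e1 + e2) = e1 / (e1 + e2)"
    by (simp_all add: field_simps)
  then have "measure_pmf.expectation (pipage_step sel n z) (pipage_potential n f a) =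
      e2 / (e1 + e2) * pipage_potential n f a (z(i := z i + e1, j := z j - e1))
    + e1 / (e1 + e2) * pipage_potential n f a (z(i := z i - e2, j := z j + e2))"
    unfolding step by (simp add: mult.commute)
  moreover have "pipage_potential n f a z \<le> \<dots>"
    using zi zj assms(3) unfolding e
    by (intro pipage_potential_pair_move assms(2) \<open>i \<noteq> j\<close>) auto
  ultimately show ?thesis by simp
next
  case (2 i)
  then have "i \<in> frac_coords n z"
    by simp
  then have zi: "i < n" "z i \<in> {0..1}"
    unfolding frac_coords_def by auto
  have "pipage_potential n f a z = pipage_potential n f a (z(i := z i))"
    by simp
  also have "\<dots> = z i * pipage_potential n f a (z(i := 1)) + (1 - z i) * pipage_potential n f a (z(i := 0))"
    using zi assms(3) by (intro pipage_potential_fun_upd) auto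
  also have "\<dots> = measure_pmf.expectation (pipage_step sel n z) (pipage_potential n f a)"
    using zi unfolding pipage_step_single[OF 2] by simp
  finally show ?thesis by simp
next
  case 3
  then show ?thesis unfolding pipage_step_integral[OF 3] by simp
qed

lemma pipage_potential_integral:
  assumes "\<forall>k<n. z k \<in> {0, 1}"
  shows "pipage_potential n f a z =
         measure_pmf.expectation (map_pmf (\<lambda>C. {k. k < n \<and> z k = 1} \<inter> C) (Ind n a)) f"
proof -
  have "Ind n (\<lambda>k. z k * a k) = Ind n (\<lambda>k. if k \<in> {k. k < n \<and> z k = 1} then a k else 0)"
    using assms by (intro Ind_cong) auto
  then show ?thesis
    unfolding pipage_potential_def multilinear_ext_def Ind_restrict by simp
qed

lemma pipage_potential_le_pipage_iter:
  assumes "valid_selector n sel" "submodular n f" "\<forall>k<n. a k \<in> {0..1}"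
    and "\<forall>k<n. z k \<in> {0..1}" "card (frac_coords n z) \<le> m"
  shows "pipage_potential n f a z \<le> measure_pmf.expectation (pipage_iter sel n m z)
           (\<lambda>w. measure_pmf.expectation (map_pmf (\<lambda>C. {k. k < n \<and> w k = 1} \<inter> C) (Ind n a)) f)"
  using assms(4,5)
proof (induction m arbitrary: z)
  case 0
  then have "frac_coords n z = {}"
    using finite_frac_coords by simp
  then have "\<forall>k<n. z k \<in> {0, 1}"
    using "0.prems"(1) unfolding frac_coords_def by force
  then show ?case
    by (simp add: pipage_potential_integral)
next
  case (Suc m)
  let ?E = "\<lambda>z'. measure_pmf.expectation (pipage_iter sel n m z')
              (\<lambda>w. measure_pmf.expectation (map_pmf (\<lambda>C. {k. k < n \<and> w k = 1} \<inter> C) (Ind n a)) f)"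
  have "pipage_potential n f a z \<le> measure_pmf.expectation (pipage_step sel n z) (pipage_potential n f a)"
    by (rule pipage_potential_le_pipage_step[OF assms(1-3)])
  also have "\<dots> \<le> measure_pmf.expectation (pipage_step sel n z) ?E"
  proof (intro integral_mono_AE integrable_measure_pmf_finite finite_set_pmf_pipage_step)
    show "AE z' in measure_pmf (pipage_step sel n z). pipage_potential n f a z' \<le> ?E z'"
      unfolding AE_measure_pmf_iff
    proof
      fix z' assume z': "z' \<in> set_pmf (pipage_step sel n z)"
      have "card (frac_coords n z') < card (frac_coords n z) \<or> frac_coords n z' = {}"
        using set_pmf_pipage_step(2)[OF assms(1) Suc.prems(1) z'] psubset_card_mono[OF finite_frac_coords]
        by blast
      then have "card (frac_coords n z') \<le> m"
        using Suc.prems(2) by auto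
      then show "pipage_potential n f a z' \<le> ?E z'"
        using Suc.IH set_pmf_pipage_step(1)[OF assms(1) Suc.prems(1) z'] by blast
    qed
  qed
  finally show ?case
    by (simp add: expectation_bind_pmf_finite finite_set_pmf_pipage_step finite_set_pmf_pipage_iter)
qed

theorem lemma14:
  fixes n l :: nat and I :: "nat set set" and sel :: "(nat \<Rightarrow> real) \<Rightarrow> nat \<times> nat"
    and x y :: "nat \<Rightarrow> real" and f :: "nat set \<Rightarrow> real"
  assumes "matroid n I"
    and "valid_selector n sel"
    and "x \<in> X_tilde n l"
    and "y \<in> Y_tilde n I x"
    and "submodular n f"
  shows "measure_pmf.expectation (Q_dist n y x (pipage_rounding sel n x)) f
           \<ge> measure_pmf.expectation (Ind n y) f"
proof -
  define a where "a = (\<lambda>i. if x i \<noteq> 0 then y i / x i else 0)"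
  have x: "\<forall>k<n. x k \<in> {0..1}" and y: "\<forall>k<n. 0 \<le> y k \<and> y k \<le> x k"
    using assms(3,4) unfolding X_tilde_def Y_tilde_def by auto
  then have a: "\<forall>k<n. a k \<in> {0..1}"
    unfolding a_def by (auto simp: divide_le_eq_1)
  have "Ind n y = Ind n (\<lambda>k. x k * a k)"
    using y unfolding a_def by (intro Ind_cong) force
  then have "measure_pmf.expectation (Ind n y) f = pipage_potential n f a x"
    unfolding pipage_potential_def multilinear_ext_def by simp
  also have "\<dots> \<le> measure_pmf.expectation (pipage_iter sel n n x)
      (\<lambda>z. measure_pmf.expectation (map_pmf (\<lambda>C. {k. k < n \<and> z k = 1} \<inter> C) (Ind n a)) f)"
    using card_mono[of "{..<n}" "frac_coords n x"]
    by (intro pipage_potential_le_pipage_iter assms(2,5) a x) (auto simp: frac_coords_def)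
  also have "\<dots> = measure_pmf.expectation (Q_dist n y x (pipage_rounding sel n x)) f"
    unfolding Q_dist_def pipage_rounding_def bind_map_pmf a_def[symmetric]
    by (simp add: expectation_bind_pmf_finite finite_set_pmf_pipage_iter finite_set_pmf_Ind)
  finally show ?thesis .
qed

end
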